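(* Let $\boldsymbol{H}$ be a self-adjoint operator on $L^{2}(\mathbb{Z}_{p})$ defined on $\mathcal{D}(\mathbb{Z}_{p})$, with unitary group $e^{-i\boldsymbol{H}t}$. Let $\mathcal{N}\subset\mathbb{Z}_{p}$ have measure zero and $\{\mathcal{K}_{j}\}_{j\in\mathbb{J}}$ be pairwise disjoint open compact subsets with $\mathbb{Z}_{p}\smallsetminus\mathcal{N}=\bigsqcup_{j\in\mathbb{J}}\mathcal{K}_{j}$, where $\mathbb{J}$ is a finite set. Put $e_{v}=c_{v}1_{\mathcal{K}_{v}}$ with $\|e_v\|_2=1$, and assume $\mathcal{H}_{\mathbb{J}}:=\mathrm{Span}\{e_j;\ j\in\mathbb{J}\}$ is a Hilbert subspace of $L^2(\mathbb{Z}_p)$. For $r,v\in\mathbb{J}$ set $\pi_{r,v}(t)=|\langle e_{r},e^{-i\boldsymbol{H}t}e_{v}\rangle|^{2}$; introduce an extra state $\infty$ and set $\pi_{\infty,v}(t)=1-\sum_{r\in\mathbb{J}}\pi_{r,v}(t)$ for $v\in\mathbb{J}$, $\pi_{s,\infty}(t)=0$ for $s\in\mathbb{J}$ and $\pi_{\infty,\infty}(t)=1$, for all $t\ge0$. Then $[\pi_{s,r}(t)]_{s,r\in\mathbb{J}\cup\{\infty\}}$ is the transition matrix of a continuous-time quantum Markov chain with state space $\mathbb{J}\cup\{\infty\}$.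
   Context: $p$ is a fixed prime; $\mathbb{Z}_p$ carries the Haar measure with $\int_{\mathbb{Z}_p}dx=1$; $\langle f,g\rangle=\int f\overline g\,dx$. By the transition matrix of a continuous-time quantum Markov chain on a state space $S$ the paper means a family $[\pi_{s,r}(t)]_{s,r\in S}$, $t\ge0$, with $\pi_{s,r}(t)\in[0,1]$ and $\sum_{s\in S}\pi_{s,r}(t)=1$ for all $r\in S$, $t\ge 0$, interpreted as the probability of being in state $s$ at time $t$ having started in $r$. *)

theory Defs
  imports "HOL-Probability.Probability"
begin

text \<open>The p-adic integers are modelled through their digit expansions
  x = x 0 + x 1 * p + x 2 * p^2 + ..., i.e. as the set of digit sequences
  nat \<Rightarrow> nat with all digits below p.  Under this (homeomorphic, measure
  preserving) identification the topology of Z_p is the product of discrete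
  topologies on {0..<p}, and the normalised Haar measure is the infinite
  product of uniform probability measures on {0..<p}.\<close>

type_synonym padic = "nat \<Rightarrow> nat"

definition Zp :: "nat \<Rightarrow> padic set" where
  "Zp p = PiE UNIV (\<lambda>_. {..<p})"

definition Zp_top :: "nat \<Rightarrow> padic topology" where
  "Zp_top p = product_topology (\<lambda>_. discrete_topology {..<p}) UNIV"

definition haar :: "nat \<Rightarrow> padic measure" where
  "haar p = PiM UNIV (\<lambda>_. uniform_count_measure {..<p})"

definition L2 :: "nat \<Rightarrow> (padic \<Rightarrow> complex) set" where
  "L2 p = {f. f \<in> borel_measurable (haar p) \<and> integrable (haar p) (\<lambda>x. (cmod (f x))\<^sup>2)}"

definition l2_inner :: "nat \<Rightarrow> (padic \<Rightarrow> complex) \<Rightarrow> (padic \<Rightarrow> complex) \<Rightarrow> complex" where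
  "l2_inner p f g = (LINT x|haar p. f x * cnj (g x))"

definition l2_norm :: "nat \<Rightarrow> (padic \<Rightarrow> complex) \<Rightarrow> real" where
  "l2_norm p f = sqrt (LINT x|haar p. (cmod (f x))\<^sup>2)"

text \<open>Test functions D(Z_p): locally constant functions on Z_p (Z_p is compact,
  so the support condition is automatic); locally constant means depending only
  on finitely many digits.\<close>
definition test_functions :: "nat \<Rightarrow> (padic \<Rightarrow> complex) set" where
  "test_functions p = {\<phi>. \<exists>n. \<forall>x\<in>Zp p. \<forall>y\<in>Zp p. (\<forall>i<n. x i = y i) \<longrightarrow> \<phi> x = \<phi> y}"

definition unitary_L2 :: "nat \<Rightarrow> ((padic \<Rightarrow> complex) \<Rightarrow> (padic \<Rightarrow> complex)) \<Rightarrow> bool" where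
  "unitary_L2 p V \<longleftrightarrow>
     (\<forall>f\<in>L2 p. V f \<in> L2 p) \<and>
     (\<forall>f\<in>L2 p. \<forall>g\<in>L2 p. \<forall>a b. AE x in haar p. V (\<lambda>y. a * f y + b * g y) x = a * V f x + b * V g x) \<and>
     (\<forall>f\<in>L2 p. \<forall>g\<in>L2 p. l2_inner p (V f) (V g) = l2_inner p f g) \<and>
     (\<forall>g\<in>L2 p. \<exists>f\<in>L2 p. AE x in haar p. V f x = g x)"

text \<open>U is the unitary group e^{-iHt} of the (self-adjoint) operator H defined on
  D(Z_p): a strongly continuous one-parameter unitary group whose generator
  -iH acts on every test function as -i H.\<close>
definition unitary_group_of :: "nat \<Rightarrow> ((padic \<Rightarrow> complex) \<Rightarrow> (padic \<Rightarrow> complex))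
     \<Rightarrow> (real \<Rightarrow> (padic \<Rightarrow> complex) \<Rightarrow> (padic \<Rightarrow> complex)) \<Rightarrow> bool" where
  "unitary_group_of p H U \<longleftrightarrow>
     (\<forall>t. unitary_L2 p (U t)) \<and>
     (\<forall>f\<in>L2 p. AE x in haar p. U 0 f x = f x) \<and>
     (\<forall>s t. \<forall>f\<in>L2 p. AE x in haar p. U (s + t) f x = U s (U t f) x) \<and>
     (\<forall>f\<in>L2 p. \<forall>t0. ((\<lambda>t. l2_norm p (\<lambda>x. U t f x - U t0 f x)) \<longlongrightarrow> 0) (at t0)) \<and>
     (\<forall>\<phi>\<in>test_functions p. H \<phi> \<in> L2 p \<and>
        ((\<lambda>t. l2_norm p (\<lambda>x. (U t \<phi> x - \<phi> x) / complex_of_real t + \<i> * H \<phi> x)) \<longlongrightarrow> 0) (at 0)) \<and>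
     (\<forall>\<phi>\<in>test_functions p. \<forall>\<psi>\<in>test_functions p. l2_inner p (H \<phi>) \<psi> = l2_inner p \<phi> (H \<psi>))"

definition qmc_transition_matrix :: "'s set \<Rightarrow> (real \<Rightarrow> 's \<Rightarrow> 's \<Rightarrow> real) \<Rightarrow> bool" where
  "qmc_transition_matrix S \<pi> \<longleftrightarrow>
     (\<forall>t\<ge>0. \<forall>s\<in>S. \<forall>r\<in>S. 0 \<le> \<pi> t s r \<and> \<pi> t s r \<le> 1) \<and>
     (\<forall>t\<ge>0. \<forall>r\<in>S. (\<Sum>s\<in>S. \<pi> t s r) = 1)"

text \<open>The matrix pi of the theorem; the extra state \<infinity> is None, state j is Some j.\<close>
definition pi_mat :: "nat \<Rightarrow> (real \<Rightarrow> (padic \<Rightarrow> complex) \<Rightarrow> (padic \<Rightarrow> complex))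
     \<Rightarrow> ('j \<Rightarrow> padic \<Rightarrow> complex) \<Rightarrow> 'j set \<Rightarrow> real \<Rightarrow> 'j option \<Rightarrow> 'j option \<Rightarrow> real" where
  "pi_mat p U e J t s r =
     (case r of
        Some v \<Rightarrow> (case s of
            Some r' \<Rightarrow> (cmod (l2_inner p (e r') (U t (e v))))\<^sup>2
          | None \<Rightarrow> 1 - (\<Sum>r'\<in>J. (cmod (l2_inner p (e r') (U t (e v))))\<^sup>2))
      | None \<Rightarrow> (case s of Some _ \<Rightarrow> 0 | None \<Rightarrow> 1))"

end

theory Submission
  imports Defs
begin

text \<open>The only substantial point is that every column of the J-block sums to at most 1.
  Unitarity gives the column v the total mass 1 = |U t e_v|^2, and since the e_r have
  disjoint supports and norm 1, Cauchy-Schwarz on each support K_r yields the Bessel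
  inequality: the sum over r of |<e_r, U t e_v>|^2 is at most the mass of U t e_v on the
  union of the K_r, hence at most 1.  The missing mass goes to the absorbing state.\<close>

lemma Cauchy_Schwarz_integral_nonneg:
  fixes f g :: "'a \<Rightarrow> real"
  assumes [measurable]: "f \<in> borel_measurable M" "g \<in> borel_measurable M"
    and f_nonneg: "\<And>x. 0 \<le> f x" and g_nonneg: "\<And>x. 0 \<le> g x"
    and f_int: "integrable M (\<lambda>x. f x ^ 2)" and g_int: "integrable M (\<lambda>x. g x ^ 2)"
  shows "(LINT x|M. f x * g x)\<^sup>2 \<le> (LINT x|M. f x ^ 2) * (LINT x|M. g x ^ 2)"
proof -
  have fg_int: "integrable M (\<lambda>x. f x * g x)"
  proof (rule Bochner_Integration.integrable_bound[of _ "\<lambda>x. f x ^ 2 + g x ^ 2"])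
    show "integrable M (\<lambda>x. f x ^ 2 + g x ^ 2)" using f_int g_int by auto
    have "f x * g x \<le> f x ^ 2 + g x ^ 2" for x
      using sum_squares_bound[of "f x" "g x"] mult_nonneg_nonneg[OF f_nonneg g_nonneg, of x x]
      by simp
    then show "AE x in M. norm (f x * g x) \<le> norm (f x ^ 2 + g x ^ 2)"
      using f_nonneg g_nonneg by auto
  qed measurable
  have nn_eq: "(\<integral>\<^sup>+x. ennreal (h x) \<partial>M) = ennreal (LINT x|M. h x)"
    if "integrable M h" "\<And>x. 0 \<le> h x" for h :: "'a \<Rightarrow> real"
    using that by (intro nn_integral_eq_integral) auto
  have "(\<integral>\<^sup>+x. ennreal (f x) * ennreal (g x) \<partial>M)\<^sup>2
      \<le> (\<integral>\<^sup>+x. ennreal (f x) ^ 2 \<partial>M) * (\<integral>\<^sup>+x. ennreal (g x) ^ 2 \<partial>M)"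
    by (rule Cauchy_Schwarz_nn_integral) auto
  then have "ennreal (LINT x|M. f x * g x) ^ 2
      \<le> ennreal (LINT x|M. f x ^ 2) * ennreal (LINT x|M. g x ^ 2)"
    using f_nonneg g_nonneg
    by (simp add: ennreal_mult[symmetric] ennreal_power nn_eq fg_int f_int g_int)
  moreover have "0 \<le> (LINT x|M. f x * g x)" "0 \<le> (LINT x|M. f x ^ 2)" "0 \<le> (LINT x|M. g x ^ 2)"
    using f_nonneg g_nonneg by (simp_all add: integral_nonneg_AE)
  ultimately have "ennreal ((LINT x|M. f x * g x)\<^sup>2)
      \<le> ennreal ((LINT x|M. f x ^ 2) * (LINT x|M. g x ^ 2))"
    by (simp add: ennreal_power ennreal_mult)
  then show ?thesis
    by (rule ennreal_le_iff[THEN iffD1, rotated]) (simp add: integral_nonneg_AE)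
qed

lemma Cauchy_Schwarz_integral_support:
  fixes f g :: "'a \<Rightarrow> complex"
  assumes [measurable]: "f \<in> borel_measurable M" "g \<in> borel_measurable M"
    and f_int: "integrable M (\<lambda>x. (cmod (f x))\<^sup>2)" and g_int: "integrable M (\<lambda>x. (cmod (g x))\<^sup>2)"
  shows "(cmod (LINT x|M. f x * cnj (g x)))\<^sup>2
    \<le> (LINT x|M. (cmod (f x))\<^sup>2) * (LINT x|M. indicator {x. f x \<noteq> 0} x * (cmod (g x))\<^sup>2)"
proof -
  define S where "S = {x. f x \<noteq> 0}"
  have [measurable]: "(indicator S :: 'a \<Rightarrow> real) \<in> borel_measurable M"
    unfolding S_def borel_measurable_indicator_iff by measurable
  define g' where "g' x = indicator S x * cmod (g x)" for x
  have [measurable]: "g' \<in> borel_measurable M" unfolding g'_def by measurable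
  have g'_square: "g' x ^ 2 = indicator S x * (cmod (g x))\<^sup>2" for x
    by (simp add: g'_def indicator_def)
  have g'_int: "integrable M (\<lambda>x. g' x ^ 2)"
    unfolding g'_square
  proof (rule Bochner_Integration.integrable_bound[OF g_int])
    show "(\<lambda>x. indicator S x * (cmod (g x))\<^sup>2) \<in> borel_measurable M" by measurable
  qed (auto simp: indicator_def)
  have "cmod (LINT x|M. f x * cnj (g x)) \<le> (LINT x|M. cmod (f x * cnj (g x)))"
    by (rule integral_norm_bound)
  also have "(\<lambda>x. cmod (f x * cnj (g x))) = (\<lambda>x. cmod (f x) * g' x)"
    by (auto simp: g'_def S_def indicator_def norm_mult)
  finally have "(cmod (LINT x|M. f x * cnj (g x)))\<^sup>2 \<le> (LINT x|M. cmod (f x) * g' x)\<^sup>2"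
    by (intro power_mono) auto
  also have "\<dots> \<le> (LINT x|M. (cmod (f x))\<^sup>2) * (LINT x|M. g' x ^ 2)"
    by (rule Cauchy_Schwarz_integral_nonneg) (use f_int g'_int in \<open>auto simp: g'_def\<close>)
  finally show ?thesis unfolding g'_square S_def .
qed

lemma Bessel_inequality_disjoint_supports:
  fixes e :: "'j \<Rightarrow> 'a \<Rightarrow> complex" and g :: "'a \<Rightarrow> complex"
  assumes "finite J" and disj: "disjoint_family_on (\<lambda>r. {x. e r x \<noteq> 0}) J"
    and e_meas: "\<And>r. r \<in> J \<Longrightarrow> e r \<in> borel_measurable M"
    and e_norm: "\<And>r. r \<in> J \<Longrightarrow> (LINT x|M. (cmod (e r x))\<^sup>2) = 1"
    and [measurable]: "g \<in> borel_measurable M" and g_int: "integrable M (\<lambda>x. (cmod (g x))\<^sup>2)"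
  shows "(\<Sum>r\<in>J. (cmod (LINT x|M. e r x * cnj (g x)))\<^sup>2) \<le> (LINT x|M. (cmod (g x))\<^sup>2)"
proof -
  define h where "h r x = indicator {x. e r x \<noteq> 0} x * (cmod (g x))\<^sup>2" for r x
  have h_int: "integrable M (h r)" if "r \<in> J" for r
  proof (rule Bochner_Integration.integrable_bound[OF g_int])
    have [measurable]: "e r \<in> borel_measurable M" using e_meas[OF that] .
    have "(indicator {x. e r x \<noteq> 0} :: 'a \<Rightarrow> real) \<in> borel_measurable M"
      unfolding borel_measurable_indicator_iff by measurable
    then show "h r \<in> borel_measurable M" unfolding h_def by measurable
  qed (auto simp: h_def indicator_def)
  have "(\<Sum>r\<in>J. (cmod (LINT x|M. e r x * cnj (g x)))\<^sup>2) \<le> (\<Sum>r\<in>J. LINT x|M. h r x)"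
  proof (rule sum_mono)
    fix r assume r: "r \<in> J"
    have "integrable M (\<lambda>x. (cmod (e r x))\<^sup>2)"
      using e_norm[OF r] not_integrable_integral_eq by fastforce
    then show "(cmod (LINT x|M. e r x * cnj (g x)))\<^sup>2 \<le> (LINT x|M. h r x)"
      using Cauchy_Schwarz_integral_support[OF e_meas[OF r]] g_int e_norm[OF r]
      unfolding h_def by simp
  qed
  also have "\<dots> = (LINT x|M. (\<Sum>r\<in>J. h r x))"
    using h_int by (intro Bochner_Integration.integral_sum[symmetric])
  also have "\<dots> \<le> (LINT x|M. (cmod (g x))\<^sup>2)"
  proof (rule integral_mono)
    fix x
    have "(\<Sum>r\<in>J. h r x) = indicator (\<Union>r\<in>J. {x. e r x \<noteq> 0}) x * (cmod (g x))\<^sup>2"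
      using disj \<open>finite J\<close> by (simp add: h_def sum_distrib_right[symmetric] indicator_UN_disjoint)
    then show "(\<Sum>r\<in>J. h r x) \<le> (cmod (g x))\<^sup>2"
      by (simp add: indicator_def)
  qed (use h_int g_int in auto)
  finally show ?thesis .
qed

lemma scaled_indicator_in_L2:
  assumes "l2_norm p (\<lambda>x. c * indicator K x) \<noteq> 0"
  shows "(\<lambda>x. c * indicator K x) \<in> L2 p"
proof -
  have square: "(cmod (c * indicator K x))\<^sup>2 = (cmod c)\<^sup>2 * indicator K x" for x
    by (simp add: indicator_def)
  have int: "integrable (haar p) (\<lambda>x. (cmod (c * indicator K x))\<^sup>2)"
    using assms not_integrable_integral_eq unfolding l2_norm_def by fastforce
  have "c \<noteq> 0" using assms by (cases "c = 0") (auto simp: l2_norm_def)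
  with int have "integrable (haar p) (indicator K :: padic \<Rightarrow> real)"
    unfolding square by simp
  then have "(indicator K :: padic \<Rightarrow> complex) \<in> borel_measurable (haar p)"
    by (simp add: integrable_indicator_iff borel_measurable_indicator_iff)
  with int show ?thesis unfolding L2_def by simp
qed

lemma l2_norm_unitary:
  assumes "unitary_L2 p V" and "f \<in> L2 p"
  shows "l2_norm p (V f) = l2_norm p f"
proof -
  have self: "l2_inner p g g = complex_of_real (l2_norm p g ^ 2)" for g
  proof -
    have "(\<lambda>x. g x * cnj (g x)) = (\<lambda>x. complex_of_real ((cmod (g x))\<^sup>2))"
      by (simp only: complex_norm_square)
    then show ?thesis
      by (simp only: l2_inner_def l2_norm_def integral_complex_of_real)
        (simp add: integral_nonneg_AE)
  qed
  have "l2_inner p (V f) (V f) = l2_inner p f f"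
    using assms unfolding unitary_L2_def by blast
  then have "l2_norm p (V f) ^ 2 = l2_norm p f ^ 2" unfolding self of_real_eq_iff .
  then show ?thesis by (simp add: l2_norm_def power2_eq_iff_nonneg)
qed

lemma qmc_transition_matrix_pi_mat:
  assumes "finite J"
    and sub_stochastic: "\<And>t v. v \<in> J \<Longrightarrow> (\<Sum>r\<in>J. (cmod (l2_inner p (e r) (U t (e v))))\<^sup>2) \<le> 1"
  shows "qmc_transition_matrix (insert None (Some ` J)) (pi_mat p U e J)"
proof -
  have entry_le_1: "(cmod (l2_inner p (e r) (U t (e v))))\<^sup>2 \<le> 1" if "r \<in> J" "v \<in> J" for r v t
    using member_le_sum[of r J "\<lambda>r. (cmod (l2_inner p (e r) (U t (e v))))\<^sup>2"]
      sub_stochastic[OF that(2), of t] that \<open>finite J\<close> by fastforce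
  have "(\<Sum>s\<in>insert None (Some ` J). pi_mat p U e J t s r)
      = pi_mat p U e J t None r + (\<Sum>j\<in>J. pi_mat p U e J t (Some j) r)" for t r
    using \<open>finite J\<close> by (simp add: sum.reindex)
  then show ?thesis
    unfolding qmc_transition_matrix_def
    using sub_stochastic entry_le_1
    by (auto simp: pi_mat_def sum_nonneg split: option.split)
qed

theorem theorem2:
  fixes p :: nat and H :: "(padic \<Rightarrow> complex) \<Rightarrow> (padic \<Rightarrow> complex)"
    and U :: "real \<Rightarrow> (padic \<Rightarrow> complex) \<Rightarrow> (padic \<Rightarrow> complex)"
    and N :: "padic set" and J :: "'j set" and K :: "'j \<Rightarrow> padic set"
    and c :: "'j \<Rightarrow> complex" and e :: "'j \<Rightarrow> padic \<Rightarrow> complex"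
  assumes "prime p"
    and "unitary_group_of p H U"
    and "N \<subseteq> Zp p" and "N \<in> null_sets (haar p)"
    and "finite J"
    and "\<And>j. j \<in> J \<Longrightarrow> openin (Zp_top p) (K j) \<and> compactin (Zp_top p) (K j)"
    and "disjoint_family_on K J"
    and "Zp p - N = (\<Union>j\<in>J. K j)"
    and "\<And>v. e v = (\<lambda>x. c v * indicator (K v) x)"
    and "\<And>v. v \<in> J \<Longrightarrow> l2_norm p (e v) = 1"
  shows "qmc_transition_matrix (insert None (Some ` J)) (pi_mat p U e J)"
proof (rule qmc_transition_matrix_pi_mat[OF \<open>finite J\<close>])
  fix t v assume v: "v \<in> J"
  have unitary: "unitary_L2 p (U t)" using assms(2) unfolding unitary_group_of_def by blast
  have e_L2: "e r \<in> L2 p" if "r \<in> J" for r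
    using scaled_indicator_in_L2[of p "c r" "K r"] assms(9,10)[of r] that by simp
  have Ue_L2: "U t (e v) \<in> L2 p" using unitary e_L2[OF v] unfolding unitary_L2_def by blast
  have disj: "disjoint_family_on (\<lambda>r. {x. e r x \<noteq> 0}) J"
    using assms(7) by (rule disjoint_family_on_bisimulation) (auto simp: assms(9) indicator_def)
  have e_norm: "(LINT x|haar p. (cmod (e r x))\<^sup>2) = 1" if "r \<in> J" for r
    using assms(10)[OF that] by (simp add: l2_norm_def)
  have "(\<Sum>r\<in>J. (cmod (l2_inner p (e r) (U t (e v))))\<^sup>2) \<le> (LINT x|haar p. (cmod (U t (e v) x))\<^sup>2)"
    unfolding l2_inner_def
    by (rule Bessel_inequality_disjoint_supports[OF \<open>finite J\<close> disj _ e_norm])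
      (use e_L2 Ue_L2 in \<open>auto simp: L2_def\<close>)
  also have "\<dots> = l2_norm p (U t (e v)) ^ 2"
    by (simp add: l2_norm_def integral_nonneg_AE)
  also have "\<dots> = 1" using l2_norm_unitary[OF unitary e_L2[OF v]] assms(10)[OF v] by simp
  finally show "(\<Sum>r\<in>J. (cmod (l2_inner p (e r) (U t (e v))))\<^sup>2) \<le> 1" .
qed

end
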